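(* Let $n\ge2$, $q=2^m$, and let $\mathbf{H}_X^{(q)}$ be a $q$-ary labeling of the toric Tanner graph $\mathcal{G}_X$ (as defined in the context) with code $\mathcal{C}_X^{(q)}$. If every cycle of the labeled graph $\mathcal{G}_X$ has product $1$, then $\dim_{\mathbb{F}_q}\mathcal{C}_X^{(q)}=n^2+1$.
   Context: Indices are taken in $\mathbb{Z}_{2n}=\{0,\dots,2n-1\}$ with arithmetic mod $2n$. Variable nodes: $V=\{(i,j)\in\mathbb{Z}_{2n}^2: i+j\text{ even}\}$ ($2n^2$ nodes). $X$-check nodes: $C_X=\{(i,j): i\text{ odd}, j\text{ even}\}$ ($n^2$ nodes). Each check node $(i,j)$ is adjacent to the four variable nodes $(i\pm1,j)$, $(i,j\pm1)$; $\mathcal{G}_X$ is the resulting bipartite graph on $V\cup C_X$. A $q$-ary labeling is a matrix $\mathbf{H}_X^{(q)}=(x_{c,v})\in\mathbb{F}_q^{C_X\times V}$ with $x_{c,v}\neq0$ iff $c$ and $v$ are adjacent; the label of edge $(c,v)$ is $x_{c,v}$. $\mathcal{C}_X^{(q)}=\{w\in\mathbb{F}_q^V:\mathbf{H}_X^{(q)}w=0\}$. For a cycle $v_1,c_1,v_2,\dots,v_k,c_k,v_1$ its product is $\prod_{t=1}^k x_{c_t v_{t+1}}x_{c_t v_t}^{-1}$ (indices of $v$ mod $k$). *)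

theory Defs
  imports Complex_Main "HOL-Library.Function_Algebras"
begin

text \<open>Toric Tanner graph G_X. Nodes are pairs (i,j) of naturals with i,j < 2n,
  representing elements of Z_2n x Z_2n; arithmetic is taken mod 2n.\<close>

definition var_nodes :: "nat \<Rightarrow> (nat \<times> nat) set" where
  "var_nodes n = {(i,j). i < 2*n \<and> j < 2*n \<and> even (i+j)}"

definition xcheck_nodes :: "nat \<Rightarrow> (nat \<times> nat) set" where
  "xcheck_nodes n = {(i,j). i < 2*n \<and> j < 2*n \<and> odd i \<and> even j}"

definition nbrs :: "nat \<Rightarrow> nat \<times> nat \<Rightarrow> (nat \<times> nat) set" where
  "nbrs n c = (case c of (i,j) \<Rightarrow>
     {((i+1) mod (2*n), j), ((i + 2*n - 1) mod (2*n), j),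
      (i, (j+1) mod (2*n)), (i, (j + 2*n - 1) mod (2*n))})"

definition adjX :: "nat \<Rightarrow> nat \<times> nat \<Rightarrow> nat \<times> nat \<Rightarrow> bool" where
  "adjX n c v \<longleftrightarrow> c \<in> xcheck_nodes n \<and> v \<in> var_nodes n \<and> v \<in> nbrs n c"

definition is_labeling :: "nat \<Rightarrow> (nat \<times> nat \<Rightarrow> nat \<times> nat \<Rightarrow> 'a::field) \<Rightarrow> bool" where
  "is_labeling n x \<longleftrightarrow>
     (\<forall>c \<in> xcheck_nodes n. \<forall>v \<in> var_nodes n. x c v \<noteq> 0 \<longleftrightarrow> adjX n c v)"

definition codeX :: "nat \<Rightarrow> (nat \<times> nat \<Rightarrow> nat \<times> nat \<Rightarrow> 'a::field) \<Rightarrow> (nat \<times> nat \<Rightarrow> 'a) set" where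
  "codeX n x = {w. (\<forall>v. v \<notin> var_nodes n \<longrightarrow> w v = 0) \<and>
                   (\<forall>c \<in> xcheck_nodes n. (\<Sum>v \<in> var_nodes n. x c v * w v) = 0)}"

text \<open>A cycle v_1,c_1,v_2,...,v_k,c_k,v_1 of G_X (lists vs, cs of length k), with
  distinct vertices; c_t is adjacent to v_t and v_(t+1), indices mod k.\<close>
definition is_cycleX :: "nat \<Rightarrow> (nat \<times> nat) list \<Rightarrow> (nat \<times> nat) list \<Rightarrow> bool" where
  "is_cycleX n vs cs \<longleftrightarrow> length vs = length cs \<and> length vs \<ge> 2 \<and>
     distinct vs \<and> distinct cs \<and>
     (\<forall>t < length vs. adjX n (cs!t) (vs!t) \<and> adjX n (cs!t) (vs!((t+1) mod length vs)))"

definition cycle_product :: "(nat \<times> nat \<Rightarrow> nat \<times> nat \<Rightarrow> 'a::field) \<Rightarrow>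
    (nat \<times> nat) list \<Rightarrow> (nat \<times> nat) list \<Rightarrow> 'a" where
  "cycle_product x vs cs =
     (\<Prod>t < length vs. x (cs!t) (vs!((t+1) mod length vs)) * inverse (x (cs!t) (vs!t)))"

definition fdim :: "('b \<Rightarrow> 'a::field) set \<Rightarrow> nat" where
  "fdim S = vector_space.dim (\<lambda>(c::'a) f. (\<lambda>v. c * f v)) S"

end

theory Submission
  imports Defs "HOL-Number_Theory.Residues"
begin

text \<open>The X-checks form an \<open>n \<times> n\<close> torus whose \<open>2n\<^sup>2\<close> edges are the variables, every variable
  lying in exactly two checks. Since every cycle has product 1, the checks can be rescaled by
  nonzero gauge factors so that the two labels of each variable agree; in characteristic 2 the
  rescaled check equations then sum to zero, so one of the \<open>n\<^sup>2\<close> checks is redundant and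
  \<open>dim C \<ge> 2n\<^sup>2 - (n\<^sup>2 - 1)\<close>. Conversely, a codeword vanishing on the \<open>n\<^sup>2 + 1\<close> edges outside
  a spanning tree of the torus vanishes on the tree as well (peel off leaves), so \<open>dim C \<le> n\<^sup>2 + 1\<close>.\<close>

section \<open>Cutting down a subspace by linear functionals\<close>

context vector_space
begin

lemma subspace_Int_kernels:
  assumes "subspace S" "\<And>i. i \<in> I \<Longrightarrow> module_hom scale (*) (\<phi> i)"
  shows "subspace (S \<inter> {x. \<forall>i\<in>I. \<phi> i x = 0})"
proof -
  have "S \<inter> {x. \<forall>i\<in>I. \<phi> i x = 0} = S \<inter> \<Inter> ((\<lambda>i. {x. \<phi> i x = 0}) ` I)" by auto
  moreover have "subspace (\<Inter> ((\<lambda>i. {x. \<phi> i x = 0}) ` I))"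
    using assms(2) by (intro subspace_Inter ballI) (auto intro: module_hom.subspace_kernel)
  ultimately show ?thesis using assms(1) by (simp add: subspace_inter)
qed

lemma dim_le_dim_Int_kernel_plus_one:
  assumes S: "subspace S" "S \<subseteq> span W" "finite W"
    and \<phi>: "module_hom scale (*) \<phi>"
  shows "dim S \<le> dim (S \<inter> {x. \<phi> x = 0}) + 1"
proof (cases "S \<subseteq> {x. \<phi> x = 0}")
  case True
  then show ?thesis by (simp add: Int_absorb2)
next
  case False
  interpret \<phi>: module_hom scale "(*)" \<phi> by (rule \<phi>)
  obtain b where b: "b \<in> S" "\<phi> b \<noteq> 0" using False by blast
  obtain B where B: "B \<subseteq> S \<inter> {x. \<phi> x = 0}" "independent B"
      "S \<inter> {x. \<phi> x = 0} \<subseteq> span B" "card B = dim (S \<inter> {x. \<phi> x = 0})"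
    using basis_exists by blast
  have "finite B"
    using independent_span_bound[OF S(3) B(2)] B(1) S(2) by blast
  have "S \<subseteq> span (insert b B)"
  proof
    fix s assume s: "s \<in> S"
    define r where "r = s - scale (\<phi> s / \<phi> b) b"
    have "r \<in> S" unfolding r_def using S(1) s b(1) by (intro subspace_diff subspace_scale)
    moreover have "\<phi> r = 0" using b(2) by (simp add: r_def \<phi>.diff \<phi>.scale)
    ultimately have "r \<in> span (insert b B)" using B(3) span_mono[of B "insert b B"] by blast
    moreover have "scale (\<phi> s / \<phi> b) b \<in> span (insert b B)"
      by (intro span_scale span_base) simp
    ultimately have "r + scale (\<phi> s / \<phi> b) b \<in> span (insert b B)" by (rule span_add)
    then show "s \<in> span (insert b B)" by (simp add: r_def)
  qed
  then have "dim S \<le> card (insert b B)" using dim_le_card \<open>finite B\<close> by blast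
  also have "\<dots> \<le> card B + 1" using \<open>finite B\<close> by (simp add: card_insert_if)
  finally show ?thesis using B(4) by simp
qed

lemma dim_le_dim_Int_kernels_plus_card:
  assumes "finite I" and S: "subspace S" "S \<subseteq> span W" "finite W"
    and \<phi>: "\<And>i. i \<in> I \<Longrightarrow> module_hom scale (*) (\<phi> i)"
  shows "dim S \<le> dim (S \<inter> {x. \<forall>i\<in>I. \<phi> i x = 0}) + card I"
  using assms(1) \<phi>
proof (induction I rule: finite_induct)
  case empty
  then show ?case by simp
next
  case (insert j I)
  let ?K = "S \<inter> {x. \<forall>i\<in>I. \<phi> i x = 0}"
  have "subspace ?K" using S(1) insert.prems by (intro subspace_Int_kernels) auto
  then have "dim ?K \<le> dim (?K \<inter> {x. \<phi> j x = 0}) + 1"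
    using S(2,3) insert.prems
    by (intro dim_le_dim_Int_kernel_plus_one[where W=W]) auto
  moreover have "?K \<inter> {x. \<phi> j x = 0} = S \<inter> {x. \<forall>i\<in>insert j I. \<phi> i x = 0}" by auto
  moreover have "dim S \<le> dim ?K + card I" using insert by simp
  ultimately show ?case using insert.hyps by simp
qed

end

lemma sum_fun_apply: "(sum f A) x = (\<Sum>a\<in>A. f a x)"
  by (induction A rule: infinite_finite_induct) auto

interpretation pointwise: vector_space "(\<lambda>c f v. c * f v) :: 'a::field \<Rightarrow> ('b \<Rightarrow> 'a) \<Rightarrow> 'b \<Rightarrow> 'a"
  by unfold_locales (auto simp: algebra_simps fun_eq_iff)

lemma fdim_eq_pointwise_dim: "fdim S = pointwise.dim S"
  by (simp add: fdim_def)

lemma module_hom_pointwise_linear_combination: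
  "module_hom (\<lambda>c f v. c * f v) (*) (\<lambda>w. \<Sum>v\<in>V. a v * w v :: 'a::field)"
  unfolding module_hom_iff module_iff_vector_space
  by (auto simp: pointwise.vector_space_axioms vector_space_def algebra_simps
      sum.distrib sum_distrib_left)

lemma module_hom_pointwise_eval: "module_hom (\<lambda>c f v. c * f v) (*) (\<lambda>w. w t :: 'a::field)"
  unfolding module_hom_iff module_iff_vector_space
  by (auto simp: pointwise.vector_space_axioms vector_space_def algebra_simps)

definition supported_on :: "'b set \<Rightarrow> ('b \<Rightarrow> 'a::zero) set" where
  "supported_on V = {w. \<forall>v. v \<notin> V \<longrightarrow> w v = 0}"

lemma subspace_supported_on: "pointwise.subspace (supported_on V)"
  by (auto simp: pointwise.subspace_def supported_on_def)

definition delta :: "'b \<Rightarrow> 'b \<Rightarrow> 'a::zero_neq_one" where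
  "delta v = (\<lambda>u. if u = v then 1 else 0)"

lemma pointwise_independent_deltas: "pointwise.independent (delta ` A :: ('b \<Rightarrow> 'a::field) set)"
proof
  assume "pointwise.dependent (delta ` A :: ('b \<Rightarrow> 'a) set)"
  then obtain t u f where t: "finite t" "t \<subseteq> (delta ` A :: ('b \<Rightarrow> 'a) set)"
      "(\<Sum>g\<in>t. (\<lambda>v. u g * g v)) = 0" and f: "f \<in> t" "u f \<noteq> 0"
    unfolding pointwise.dependent_explicit by blast
  obtain a where fa: "f = delta a" using t f by blast
  have "(\<Sum>g\<in>t. u g * g a) = (\<Sum>g\<in>t. (\<lambda>v. u g * g v)) a" by (simp add: sum_fun_apply)
  also have "\<dots> = 0" using t(3) by simp
  finally have "(\<Sum>g\<in>t. u g * g a) = 0" .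
  moreover have "(\<Sum>g\<in>t. u g * g a) = u f"
  proof -
    have "(\<Sum>g\<in>t - {f}. u g * g a) = 0"
      using t(2) fa by (intro sum.neutral) (force simp: delta_def)
    then show ?thesis using sum.remove[OF t(1) f(1), of "\<lambda>g. u g * g a"] by (simp add: fa delta_def)
  qed
  ultimately show False using f(2) by simp
qed

lemma supported_on_subset_span_deltas:
  assumes "finite V"
  shows "supported_on V \<subseteq> pointwise.span (delta ` V :: ('b \<Rightarrow> 'a::field) set)"
proof
  fix w :: "'b \<Rightarrow> 'a" assume w: "w \<in> supported_on V"
  have "w = (\<Sum>v\<in>V. (\<lambda>u. w v * delta v u))"
    using w assms
    by (auto simp: fun_eq_iff sum_fun_apply supported_on_def delta_def if_distrib sum.delta cong: if_cong)
  also have "\<dots> \<in> pointwise.span (delta ` V)"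
    by (intro pointwise.span_sum pointwise.span_scale pointwise.span_base) auto
  finally show "w \<in> pointwise.span (delta ` V)" .
qed

lemma pointwise_dim_supported_on:
  assumes "finite V"
  shows "pointwise.dim (supported_on V :: ('b \<Rightarrow> 'a::field) set) = card V"
proof -
  have "inj_on (delta :: 'b \<Rightarrow> 'b \<Rightarrow> 'a) V"
    by (rule inj_onI) (metis delta_def zero_neq_one)
  moreover have "pointwise.dim (supported_on V :: ('b \<Rightarrow> 'a) set) = card (delta ` V :: ('b \<Rightarrow> 'a) set)"
    by (rule pointwise.basis_card_eq_dim[symmetric])
      (use supported_on_subset_span_deltas[OF assms] pointwise_independent_deltas in
        \<open>auto simp: supported_on_def delta_def\<close>)
  ultimately show ?thesis by (simp add: card_image)
qed

section \<open>The check torus\<close>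

definition cyc_suc :: "nat \<Rightarrow> nat \<Rightarrow> nat" where "cyc_suc n a = (a + 1) mod n"
definition cyc_pred :: "nat \<Rightarrow> nat \<Rightarrow> nat" where "cyc_pred n a = (a + n - 1) mod n"

lemma cyc_suc_eq: "a < n \<Longrightarrow> cyc_suc n a = (if a + 1 = n then 0 else a + 1)"
  by (auto simp: cyc_suc_def)

lemma cyc_pred_eq: "a < n \<Longrightarrow> cyc_pred n a = (if a = 0 then n - 1 else a - 1)"
proof (cases "a = 0")
  case False
  assume "a < n"
  have "a + n - 1 = (a - 1) + n" using False by simp
  then show ?thesis unfolding cyc_pred_def using False \<open>a < n\<close> by (simp only: mod_add_self2) simp
qed (simp add: cyc_pred_def)

lemma cyc_suc_less: "0 < n \<Longrightarrow> cyc_suc n a < n" by (simp add: cyc_suc_def)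
lemma cyc_pred_less: "0 < n \<Longrightarrow> cyc_pred n a < n" by (simp add: cyc_pred_def)

lemma cyc_pred_cyc_suc: "a < n \<Longrightarrow> cyc_pred n (cyc_suc n a) = a"
  by (auto simp: cyc_pred_eq cyc_suc_eq cyc_suc_less)
lemma cyc_suc_cyc_pred: "a < n \<Longrightarrow> cyc_suc n (cyc_pred n a) = a"
  by (auto simp: cyc_pred_eq cyc_suc_eq)

lemma cyc_suc_neq: "2 \<le> n \<Longrightarrow> a < n \<Longrightarrow> cyc_suc n a \<noteq> a"
  by (auto simp: cyc_suc_eq)
lemma cyc_pred_neq: "2 \<le> n \<Longrightarrow> a < n \<Longrightarrow> cyc_pred n a \<noteq> a"
  by (auto simp: cyc_pred_eq)

lemma bij_betw_cyc_suc: "0 < n \<Longrightarrow> bij_betw (cyc_suc n) {..<n} {..<n}"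
  by (rule bij_betw_byWitness[where f'="cyc_pred n"])
    (auto simp: cyc_pred_cyc_suc cyc_suc_cyc_pred cyc_suc_less cyc_pred_less)

lemma sum_cyc_suc: "0 < n \<Longrightarrow> (\<Sum>a<n. f (cyc_suc n a)) = (\<Sum>a<n. f a)"
  using sum.reindex_bij_betw[OF bij_betw_cyc_suc] by blast
lemma prod_cyc_suc: "0 < n \<Longrightarrow> (\<Prod>a<n. f (cyc_suc n a)) = (\<Prod>a<n. f a)"
  using prod.reindex_bij_betw[OF bij_betw_cyc_suc] by blast

text \<open>Check \<open>(a, b)\<close> of the torus sits at \<open>(2a+1, 2b)\<close>; the variable \<open>hvar a b\<close> joins the checks
  \<open>(a, b)\<close> and \<open>(a, b+1)\<close>, and \<open>vvar n a b\<close> joins \<open>(a, b)\<close> and \<open>(a+1, b)\<close> (indices mod \<open>n\<close>).\<close>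

definition xcheck :: "nat \<Rightarrow> nat \<Rightarrow> nat \<times> nat" where "xcheck a b = (2*a+1, 2*b)"
definition hvar :: "nat \<Rightarrow> nat \<Rightarrow> nat \<times> nat" where "hvar a b = (2*a+1, 2*b+1)"
definition vvar :: "nat \<Rightarrow> nat \<Rightarrow> nat \<Rightarrow> nat \<times> nat" where
  "vvar n a b = ((2*a+2) mod (2*n), 2*b)"

lemma vvar_eq: "a < n \<Longrightarrow> vvar n a b = (if a + 1 = n then 0 else 2*a+2, 2*b)"
  by (auto simp: vvar_def)

lemma vvar_cyc_pred: "2 \<le> n \<Longrightarrow> a < n \<Longrightarrow> vvar n (cyc_pred n a) b = (2*a, 2*b)"
  by (auto simp: vvar_eq cyc_pred_eq cyc_pred_less)

lemma xcheck_inject: "xcheck a b = xcheck a' b' \<longleftrightarrow> a = a' \<and> b = b'"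
  by (auto simp: xcheck_def)
lemma hvar_inject: "hvar a b = hvar a' b' \<longleftrightarrow> a = a' \<and> b = b'"
  by (auto simp: hvar_def)
lemma vvar_inject: "a < n \<Longrightarrow> a' < n \<Longrightarrow> vvar n a b = vvar n a' b' \<longleftrightarrow> a = a' \<and> b = b'"
  by (auto simp: vvar_eq split: if_splits)
lemma hvar_neq_vvar: "hvar a b \<noteq> vvar n a' b'"
proof
  assume "hvar a b = vvar n a' b'"
  then have "2*b+1 = 2*b'" by (simp add: hvar_def vvar_def)
  then show False by presburger
qed

lemma xcheck_in_xcheck_nodes: "a < n \<Longrightarrow> b < n \<Longrightarrow> xcheck a b \<in> xcheck_nodes n"
  by (simp add: xcheck_def xcheck_nodes_def)
lemma hvar_in_var_nodes: "a < n \<Longrightarrow> b < n \<Longrightarrow> hvar a b \<in> var_nodes n"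
  by (simp add: hvar_def var_nodes_def)
lemma vvar_in_var_nodes: "a < n \<Longrightarrow> b < n \<Longrightarrow> vvar n a b \<in> var_nodes n"
  by (simp add: vvar_eq var_nodes_def)

lemma xcheck_nodes_eq_image: "xcheck_nodes n = (\<lambda>(a, b). xcheck a b) ` ({..<n} \<times> {..<n})"
proof (intro equalityI subsetI)
  fix c assume "c \<in> xcheck_nodes n"
  then have "c = xcheck (fst c div 2) (snd c div 2)" "fst c div 2 < n" "snd c div 2 < n"
    by (auto simp: xcheck_nodes_def xcheck_def)
  then show "c \<in> (\<lambda>(a, b). xcheck a b) ` ({..<n} \<times> {..<n})" by force
qed (auto simp: xcheck_in_xcheck_nodes)

lemma var_nodes_cases:
  assumes "2 \<le> n" "v \<in> var_nodes n"
  obtains a b where "a < n" "b < n" "v = hvar a b" | a b where "a < n" "b < n" "v = vvar n a b"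
proof -
  obtain i j where ij: "v = (i, j)" by (cases v)
  show ?thesis
  proof (cases "odd i")
    case True
    then have "v = hvar (i div 2) (j div 2)" "i div 2 < n" "j div 2 < n"
      using assms ij by (auto simp: var_nodes_def hvar_def)
    then show ?thesis using that by blast
  next
    case False
    then have "v = vvar n (cyc_pred n (i div 2)) (j div 2)" "cyc_pred n (i div 2) < n" "j div 2 < n"
      using assms ij vvar_cyc_pred[OF assms(1), of "i div 2"]
      by (auto simp: var_nodes_def cyc_pred_less)
    then show ?thesis using that by blast
  qed
qed

lemma finite_var_nodes: "finite (var_nodes n)"
  by (rule finite_subset[of _ "{..<2*n} \<times> {..<2*n}"]) (auto simp: var_nodes_def)

lemma card_xcheck_nodes: "card (xcheck_nodes n) = n * n"
proof -
  have "inj_on (\<lambda>(a, b). xcheck a b) ({..<n} \<times> {..<n})"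
    by (auto simp: inj_on_def xcheck_inject)
  then show ?thesis by (simp add: xcheck_nodes_eq_image card_image card_cartesian_product)
qed

lemma card_var_nodes_ge: "2 * (n * n) \<le> card (var_nodes n)"
proof -
  let ?H = "(\<lambda>(a, b). hvar a b) ` ({..<n} \<times> {..<n})"
  let ?V = "(\<lambda>(a, b). vvar n a b) ` ({..<n} \<times> {..<n})"
  have "inj_on (\<lambda>(a, b). hvar a b) ({..<n} \<times> {..<n})"
    by (auto simp: inj_on_def hvar_inject)
  moreover have "inj_on (\<lambda>(a, b). vvar n a b) ({..<n} \<times> {..<n})"
    by (auto simp: inj_on_def vvar_inject)
  ultimately have "card ?H = n * n" "card ?V = n * n"
    by (simp_all add: card_image card_cartesian_product)
  moreover have "?H \<inter> ?V = {}" by (auto simp: hvar_neq_vvar hvar_neq_vvar[symmetric])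
  moreover have "?H \<union> ?V \<subseteq> var_nodes n" by (auto simp: hvar_in_var_nodes vvar_in_var_nodes)
  moreover have "card (?H \<union> ?V) \<le> card (var_nodes n)"
    using calculation(4) by (rule card_mono[OF finite_var_nodes])
  moreover have "card (?H \<union> ?V) = card ?H + card ?V"
    using calculation(3) by (intro card_Un_disjoint) auto
  ultimately show ?thesis by linarith
qed

lemma nbrs_xcheck:
  assumes "2 \<le> n" "a < n" "b < n"
  shows "nbrs n (xcheck a b) = {vvar n a b, vvar n (cyc_pred n a) b, hvar a b, hvar a (cyc_pred n b)}"
proof -
  have "(2*a+1 + 2*n - 1) mod (2*n) = 2*a" "(2*b+1) mod (2*n) = 2*b+1"
    using assms by simp_all
  moreover have "(2*b + 2*n - 1) mod (2*n) = 2 * cyc_pred n b + 1"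
  proof (cases "b = 0")
    case False
    then have "2*b + 2*n - 1 = (2*b - 1) + 2*n" by simp
    then show ?thesis using assms False by (simp only: mod_add_self2) (simp add: cyc_pred_eq)
  qed (use assms in \<open>simp add: cyc_pred_eq\<close>)
  ultimately show ?thesis
    using vvar_cyc_pred[OF assms(1,2)]
    by (simp add: nbrs_def xcheck_def hvar_def vvar_def insert_commute)
qed

lemma adjX_xcheck_iff:
  assumes "2 \<le> n" "a < n" "b < n"
  shows "adjX n (xcheck a b) v \<longleftrightarrow> v \<in> nbrs n (xcheck a b)"
  using assms
  by (auto simp: adjX_def nbrs_xcheck xcheck_in_xcheck_nodes hvar_in_var_nodes vvar_in_var_nodes
      cyc_pred_less)

lemma nbrs_subset_var_nodes:
  assumes "2 \<le> n" "c \<in> xcheck_nodes n"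
  shows "nbrs n c \<subseteq> var_nodes n"
  using assms adjX_xcheck_iff by (force simp: xcheck_nodes_eq_image adjX_def)

lemma labeling_nonzero_iff:
  assumes "2 \<le> n" "is_labeling n x" "c \<in> xcheck_nodes n" "v \<in> var_nodes n"
  shows "x c v \<noteq> 0 \<longleftrightarrow> v \<in> nbrs n c"
  using assms by (simp add: is_labeling_def adjX_def)

lemma labeling_nonzero_at_edges:
  assumes "2 \<le> n" "a < n" "b < n" "is_labeling n x"
  shows "x (xcheck a b) (hvar a b) \<noteq> 0" "x (xcheck a (cyc_suc n b)) (hvar a b) \<noteq> 0"
    and "x (xcheck a b) (vvar n a b) \<noteq> 0" "x (xcheck (cyc_suc n a) b) (vvar n a b) \<noteq> 0"
  using assms
  by (auto simp: labeling_nonzero_iff nbrs_xcheck xcheck_in_xcheck_nodes hvar_in_var_nodes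
      vvar_in_var_nodes cyc_suc_less cyc_pred_cyc_suc)

definition check_sum ::
    "nat \<Rightarrow> (nat \<times> nat \<Rightarrow> nat \<times> nat \<Rightarrow> 'a::field) \<Rightarrow> nat \<times> nat \<Rightarrow> (nat \<times> nat \<Rightarrow> 'a) \<Rightarrow> 'a" where
  "check_sum n x c w = (\<Sum>v\<in>var_nodes n. x c v * w v)"

lemma codeX_eq:
  "codeX n x = supported_on (var_nodes n) \<inter> {w. \<forall>c\<in>xcheck_nodes n. check_sum n x c w = 0}"
  by (auto simp: codeX_def supported_on_def check_sum_def)

lemma module_hom_check_sum: "module_hom (\<lambda>c f v. c * f v) (*) (check_sum n x c)"
  using module_hom_pointwise_linear_combination[of "x c" "var_nodes n"]
  by (simp add: check_sum_def[abs_def])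

lemma subspace_codeX: "pointwise.subspace (codeX n x)"
  unfolding codeX_eq
  by (intro pointwise.subspace_Int_kernels subspace_supported_on module_hom_check_sum)

lemma codeX_subset_span_deltas: "codeX n x \<subseteq> pointwise.span (delta ` var_nodes n)"
  using supported_on_subset_span_deltas[OF finite_var_nodes] by (auto simp: codeX_eq)

lemma check_sum_eq_sum_nbrs:
  assumes "2 \<le> n" "is_labeling n x" "c \<in> xcheck_nodes n"
  shows "check_sum n x c w = (\<Sum>v\<in>nbrs n c. x c v * w v)"
  unfolding check_sum_def
  using assms nbrs_subset_var_nodes[OF assms(1,3)] labeling_nonzero_iff[OF assms]
  by (intro sum.mono_neutral_right[OF finite_var_nodes]) auto

lemma codeX_eq_0_at_last_nbr:
  assumes "2 \<le> n" "is_labeling n x" "c \<in> xcheck_nodes n" "w \<in> codeX n x"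
    and "u \<in> nbrs n c" "\<forall>v\<in>nbrs n c - {u}. w v = 0"
  shows "w u = 0"
proof -
  have "finite (nbrs n c)" by (simp add: nbrs_def split: prod.splits)
  then have "check_sum n x c w = x c u * w u"
    using assms by (simp add: check_sum_eq_sum_nbrs sum.remove)
  moreover have "check_sum n x c w = 0" using assms(3,4) by (simp add: codeX_eq)
  moreover have "x c u \<noteq> 0"
    using assms nbrs_subset_var_nodes[OF assms(1,3)] labeling_nonzero_iff by blast
  ultimately show ?thesis by simp
qed

lemma check_sum_xcheck:
  assumes "2 \<le> n" "a < n" "b < n" "is_labeling n x"
  shows "check_sum n x (xcheck a b) w =
      x (xcheck a b) (vvar n a b) * w (vvar n a b)
    + x (xcheck a b) (vvar n (cyc_pred n a) b) * w (vvar n (cyc_pred n a) b)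
    + x (xcheck a b) (hvar a b) * w (hvar a b)
    + x (xcheck a b) (hvar a (cyc_pred n b)) * w (hvar a (cyc_pred n b))"
  using assms cyc_pred_neq[OF assms(1), of a] cyc_pred_neq[OF assms(1), of b]
  by (simp add: check_sum_eq_sum_nbrs xcheck_in_xcheck_nodes nbrs_xcheck hvar_inject vvar_inject
      hvar_neq_vvar hvar_neq_vvar[symmetric] cyc_pred_less algebra_simps)

section \<open>Upper bound\<close>

text \<open>The variables outside \<open>cotree n\<close> are the edges of a spanning tree of the check torus:
  the row paths \<open>hvar a b\<close> (\<open>b < n - 1\<close>) joined by the column path \<open>vvar n a 0\<close> (\<open>a < n - 1\<close>).\<close>

definition cotree :: "nat \<Rightarrow> (nat \<times> nat) set" where
  "cotree n = (\<lambda>a. hvar a (n - 1)) ` {..<n} \<union> (\<lambda>(a, b). vvar n a b) ` ({..<n} \<times> {1..<n})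
    \<union> {vvar n (n - 1) 0}"

lemma card_cotree_le: "card (cotree n) \<le> n * n + 1"
proof -
  have "card (cotree n) \<le> card ((\<lambda>a. hvar a (n - 1)) ` {..<n})
      + card ((\<lambda>(a, b). vvar n a b) ` ({..<n} \<times> {1..<n})) + card {vvar n (n - 1) 0}"
    unfolding cotree_def by (meson card_Un_le add_right_mono order_trans)
  also have "\<dots> \<le> n + n * (n - 1) + 1"
    using card_image_le[of "{..<n}" "\<lambda>a. hvar a (n - 1)"]
      card_image_le[of "{..<n} \<times> {1..<n}" "\<lambda>(a, b). vvar n a b"]
    by (simp add: card_cartesian_product)
  also have "n + n * (n - 1) = n * n" by (cases n) auto
  finally show ?thesis .
qed

lemma codeX_hvar_eq_0_if_vanishes_on_cotree:
  assumes n: "2 \<le> n" and lab: "is_labeling n x" and w: "w \<in> codeX n x" "\<forall>t\<in>cotree n. w t = 0"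
    and "a < n" "b < n"
  shows "w (hvar a b) = 0"
proof -
  have "w (hvar a (n - 1 - k)) = 0" if "k < n" for k
    using that
  proof (induction k)
    case 0
    then show ?case using w(2) \<open>a < n\<close> by (simp add: cotree_def)
  next
    case (Suc k)
    define b where "b = n - 1 - k"
    have b: "1 \<le> b" "b < n" "cyc_pred n b = n - 1 - Suc k"
      using Suc.prems by (auto simp: b_def cyc_pred_eq)
    have vvar: "w (vvar n a' b) = 0" if "a' < n" for a'
      using w(2) that b by (force simp: cotree_def)
    show ?case
      by (rule codeX_eq_0_at_last_nbr[OF n lab xcheck_in_xcheck_nodes[OF \<open>a < n\<close> b(2)] w(1)])
        (use vvar Suc \<open>a < n\<close> b n in \<open>auto simp: nbrs_xcheck cyc_pred_less b_def\<close>)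
  qed
  from this[of "n - 1 - b"] show ?thesis using \<open>b < n\<close> by simp
qed

lemma codeX_vvar_eq_0_if_vanishes_on_cotree:
  assumes n: "2 \<le> n" and lab: "is_labeling n x" and w: "w \<in> codeX n x" "\<forall>t\<in>cotree n. w t = 0"
    and "a < n" "b < n"
  shows "w (vvar n a b) = 0"
proof -
  have hvar: "w (hvar a' b') = 0" if "a' < n" "b' < n" for a' b'
    using codeX_hvar_eq_0_if_vanishes_on_cotree[OF n lab w that] .
  have last: "w (vvar n (n - 1) 0) = 0" using w(2) by (simp add: cotree_def)
  have "w (vvar n a' 0) = 0" if "a' < n - 1" for a'
    using that
  proof (induction a')
    case 0
    have "cyc_pred n 0 = n - 1" using n by (simp add: cyc_pred_eq)
    show ?case
      by (rule codeX_eq_0_at_last_nbr[OF n lab xcheck_in_xcheck_nodes[of 0 n 0] w(1)])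
        (use \<open>cyc_pred n 0 = n - 1\<close> n hvar last in \<open>auto simp: nbrs_xcheck cyc_pred_less\<close>)
  next
    case (Suc a')
    have "cyc_pred n (Suc a') = a'" using Suc.prems by (simp add: cyc_pred_eq)
    show ?case
      by (rule codeX_eq_0_at_last_nbr[OF n lab xcheck_in_xcheck_nodes[of "Suc a'" n 0] w(1)])
        (use \<open>cyc_pred n (Suc a') = a'\<close> Suc n hvar in \<open>auto simp: nbrs_xcheck cyc_pred_less\<close>)
  qed
  moreover have "w (vvar n a b) = 0" if "1 \<le> b"
    using w(2) \<open>a < n\<close> \<open>b < n\<close> that by (force simp: cotree_def)
  ultimately show ?thesis using last \<open>a < n\<close> by (cases "b = 0"; cases "a = n - 1") auto
qed

lemma codeX_eq_0_if_vanishes_on_cotree: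
  assumes "2 \<le> n" "is_labeling n x" "w \<in> codeX n x" "\<forall>t\<in>cotree n. w t = 0"
  shows "w = 0"
proof
  fix v
  show "w v = 0 v"
  proof (cases "v \<in> var_nodes n")
    case True
    then show ?thesis
      by (cases rule: var_nodes_cases[OF assms(1)])
        (use codeX_hvar_eq_0_if_vanishes_on_cotree[OF assms]
          codeX_vvar_eq_0_if_vanishes_on_cotree[OF assms] in auto)
  next
    case False
    then show ?thesis using assms(3) by (cases v) (simp add: codeX_def)
  qed
qed

lemma dim_codeX_le:
  assumes n: "2 \<le> n" and lab: "is_labeling n x"
  shows "fdim (codeX n x) \<le> n\<^sup>2 + 1"
proof -
  have "pointwise.dim (codeX n x)
      \<le> pointwise.dim (codeX n x \<inter> {w. \<forall>t\<in>cotree n. w t = 0}) + card (cotree n)"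
    by (rule pointwise.dim_le_dim_Int_kernels_plus_card[where W = "delta ` var_nodes n"])
      (use finite_var_nodes in
        \<open>auto simp: cotree_def subspace_codeX codeX_subset_span_deltas module_hom_pointwise_eval\<close>)
  moreover have "codeX n x \<inter> {w. \<forall>t\<in>cotree n. w t = 0} \<subseteq> {0}"
    using codeX_eq_0_if_vanishes_on_cotree[OF n lab] by blast
  then have "pointwise.dim (codeX n x \<inter> {w. \<forall>t\<in>cotree n. w t = 0}) = 0"
    using pointwise.dim_le_card[of _ "{}"] by simp
  ultimately show ?thesis
    using card_cotree_le[of n] by (simp add: fdim_eq_pointwise_dim power2_eq_square)
qed

section \<open>Gauging the labels\<close>

lemma is_cycleX_map_upt:
  assumes "2 \<le> k" "inj_on p {..<k}" "inj_on q {..<k}"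
    and "\<And>t. t < k \<Longrightarrow> adjX n (q t) (p t) \<and> adjX n (q t) (p (cyc_suc k t))"
  shows "is_cycleX n (map p [0..<k]) (map q [0..<k])"
  using assms by (auto simp: is_cycleX_def distinct_map atLeast0LessThan cyc_suc_def)

lemma cycle_product_map_upt:
  "cycle_product x (map p [0..<k]) (map q [0..<k]) =
    (\<Prod>t<k. x (q t) (p (cyc_suc k t)) * inverse (x (q t) (p t)))"
  unfolding cycle_product_def by (rule prod.cong) (auto simp: cyc_suc_def)

definition hratio :: "nat \<Rightarrow> (nat \<times> nat \<Rightarrow> nat \<times> nat \<Rightarrow> 'a::field) \<Rightarrow> nat \<Rightarrow> nat \<Rightarrow> 'a" where
  "hratio n x a b = x (xcheck a b) (hvar a b) * inverse (x (xcheck a (cyc_suc n b)) (hvar a b))"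

definition vratio :: "nat \<Rightarrow> (nat \<times> nat \<Rightarrow> nat \<times> nat \<Rightarrow> 'a::field) \<Rightarrow> nat \<Rightarrow> nat \<Rightarrow> 'a" where
  "vratio n x a b = x (xcheck a b) (vvar n a b) * inverse (x (xcheck (cyc_suc n a) b) (vvar n a b))"

lemma prod_hratio_row:
  assumes n: "2 \<le> n" and "a < n"
    and cyc: "\<forall>vs cs. is_cycleX n vs cs \<longrightarrow> cycle_product x vs cs = 1"
  shows "(\<Prod>b<n. hratio n x a b) = 1"
proof -
  have "is_cycleX n (map (hvar a) [0..<n]) (map (\<lambda>b. xcheck a (cyc_suc n b)) [0..<n])"
    using n \<open>a < n\<close> inj_onD[OF bij_betw_imp_inj_on[OF bij_betw_cyc_suc]]
    by (intro is_cycleX_map_upt)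
      (auto simp: inj_on_def hvar_inject xcheck_inject adjX_xcheck_iff nbrs_xcheck cyc_suc_less
        cyc_pred_cyc_suc)
  then have "cycle_product x (map (hvar a) [0..<n]) (map (\<lambda>b. xcheck a (cyc_suc n b)) [0..<n]) = 1"
    using cyc by blast
  then have "1 = (\<Prod>b<n. x (xcheck a (cyc_suc n b)) (hvar a (cyc_suc n b))
      * inverse (x (xcheck a (cyc_suc n b)) (hvar a b)))"
    by (simp only: cycle_product_map_upt)
  also have "\<dots> = (\<Prod>b<n. hratio n x a b)"
    using n prod_cyc_suc[of n "\<lambda>b. x (xcheck a b) (hvar a b)"]
    by (simp add: hratio_def prod.distrib)
  finally show ?thesis ..
qed

lemma prod_vratio_column:
  assumes n: "2 \<le> n"
    and cyc: "\<forall>vs cs. is_cycleX n vs cs \<longrightarrow> cycle_product x vs cs = 1"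
  shows "(\<Prod>a<n. vratio n x a 0) = 1"
proof -
  have "is_cycleX n (map (\<lambda>a. vvar n a 0) [0..<n]) (map (\<lambda>a. xcheck (cyc_suc n a) 0) [0..<n])"
    using n inj_onD[OF bij_betw_imp_inj_on[OF bij_betw_cyc_suc]]
    by (intro is_cycleX_map_upt)
      (auto simp: inj_on_def vvar_inject xcheck_inject adjX_xcheck_iff nbrs_xcheck cyc_suc_less
        cyc_pred_cyc_suc)
  then have "cycle_product x (map (\<lambda>a. vvar n a 0) [0..<n])
      (map (\<lambda>a. xcheck (cyc_suc n a) 0) [0..<n]) = 1"
    using cyc by blast
  then have "1 = (\<Prod>a<n. x (xcheck (cyc_suc n a) 0) (vvar n (cyc_suc n a) 0)
      * inverse (x (xcheck (cyc_suc n a) 0) (vvar n a 0)))"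
    by (simp only: cycle_product_map_upt)
  also have "\<dots> = (\<Prod>a<n. vratio n x a 0)"
    using n prod_cyc_suc[of n "\<lambda>a. x (xcheck a 0) (vvar n a 0)"]
    by (simp add: vratio_def prod.distrib)
  finally show ?thesis ..
qed

lemma is_cycleX_face:
  assumes n: "2 \<le> n" and "a < n" "b < n"
  defines "a' \<equiv> cyc_suc n a" and "b' \<equiv> cyc_suc n b"
  shows "is_cycleX n [vvar n a b, hvar a b, vvar n a b', hvar a' b]
     [xcheck a b, xcheck a b', xcheck a' b', xcheck a' b]"
proof -
  have a': "a' < n" "a' \<noteq> a" "cyc_pred n a' = a"
    using assms by (auto simp: cyc_suc_less cyc_suc_neq cyc_pred_cyc_suc)
  have b': "b' < n" "b' \<noteq> b" "cyc_pred n b' = b"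
    using assms by (auto simp: cyc_suc_less cyc_suc_neq cyc_pred_cyc_suc)
  have "adjX n (xcheck a b) (vvar n a b)" "adjX n (xcheck a b) (hvar a b)"
    "adjX n (xcheck a b') (hvar a b)" "adjX n (xcheck a b') (vvar n a b')"
    "adjX n (xcheck a' b') (vvar n a b')" "adjX n (xcheck a' b') (hvar a' b)"
    "adjX n (xcheck a' b) (hvar a' b)" "adjX n (xcheck a' b) (vvar n a b)"
    using a' b' assms(1-3) by (simp_all add: adjX_xcheck_iff nbrs_xcheck)
  moreover have "distinct [vvar n a b, hvar a b, vvar n a b', hvar a' b]"
    using a' b' \<open>a < n\<close> by (simp add: hvar_inject vvar_inject hvar_neq_vvar hvar_neq_vvar[symmetric])
  moreover have "distinct [xcheck a b, xcheck a b', xcheck a' b', xcheck a' b]"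
    using a' b' by (simp add: xcheck_inject)
  ultimately show ?thesis by (simp add: is_cycleX_def less_Suc_eq)
qed

lemma face_relation:
  fixes x :: "nat \<times> nat \<Rightarrow> nat \<times> nat \<Rightarrow> 'a::field"
  assumes n: "2 \<le> n" and ab: "a < n" "b < n" and lab: "is_labeling n x"
    and cyc: "\<forall>vs cs. is_cycleX n vs cs \<longrightarrow> cycle_product x vs cs = 1"
  shows "vratio n x a b * hratio n x (cyc_suc n a) b = hratio n x a b * vratio n x a (cyc_suc n b)"
proof -
  define a' b' where "a' = cyc_suc n a" and "b' = cyc_suc n b"
  have "a' < n" "b' < n" using n by (auto simp: a'_def b'_def cyc_suc_less)
  have "cycle_product x [vvar n a b, hvar a b, vvar n a b', hvar a' b]
      [xcheck a b, xcheck a b', xcheck a' b', xcheck a' b] = 1"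
    using cyc is_cycleX_face[OF n ab] by (simp add: a'_def b'_def)
  moreover have "(\<Prod>t<4. f t) = f 0 * f 1 * f 2 * f 3" for f :: "nat \<Rightarrow> 'a"
    by (simp add: numeral_eq_Suc lessThan_Suc mult_ac)
  ultimately have "(x (xcheck a b) (hvar a b) * inverse (x (xcheck a b) (vvar n a b)))
      * (x (xcheck a b') (vvar n a b') * inverse (x (xcheck a b') (hvar a b)))
      * (x (xcheck a' b') (hvar a' b) * inverse (x (xcheck a' b') (vvar n a b')))
      * (x (xcheck a' b) (vvar n a b) * inverse (x (xcheck a' b) (hvar a' b))) = 1"
    by (simp add: cycle_product_def)
  moreover have "x (xcheck a b) (vvar n a b) \<noteq> 0" "x (xcheck a b') (hvar a b) \<noteq> 0"
    "x (xcheck a' b') (vvar n a b') \<noteq> 0" "x (xcheck a' b) (hvar a' b) \<noteq> 0"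
    "x (xcheck a' b) (vvar n a b) \<noteq> 0" "x (xcheck a' b') (hvar a' b) \<noteq> 0"
    using labeling_nonzero_at_edges[OF n _ _ lab] ab \<open>a' < n\<close> \<open>b' < n\<close>
    by (auto simp: a'_def b'_def)
  moreover have "q * inverse v * (y * inverse t) = p * inverse s * (r * inverse u)"
    if "p * inverse q * (r * inverse s) * (t * inverse u) * (v * inverse y) = 1"
      and "q \<noteq> 0" "s \<noteq> 0" "u \<noteq> 0" "y \<noteq> 0" "v \<noteq> 0" "t \<noteq> 0" for p q r s t u v y :: 'a
  proof -
    have "p * r * t * v = q * s * u * y" using that by (simp add: field_simps)
    then show ?thesis using that(2-) by (simp add: field_simps)
  qed
  ultimately show ?thesis
    unfolding hratio_def vratio_def a'_def[symmetric] b'_def[symmetric] by blast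
qed

text \<open>The gauge of check \<open>(a, b)\<close> multiplies the label ratios along column 0 down to row \<open>a\<close> and
  then along row \<open>a\<close>; the face relations make this path-independent, and the row and column
  relations close it up around the torus.\<close>

definition gauge :: "nat \<Rightarrow> (nat \<times> nat \<Rightarrow> nat \<times> nat \<Rightarrow> 'a::field) \<Rightarrow> nat \<Rightarrow> nat \<Rightarrow> 'a" where
  "gauge n x a b = (\<Prod>a'<a. vratio n x a' 0) * (\<Prod>b'<b. hratio n x a b')"

lemma gauge_nonzero:
  assumes "2 \<le> n" "a < n" "b < n" "is_labeling n x"
  shows "gauge n x a b \<noteq> 0"
  using assms labeling_nonzero_at_edges[OF assms(1) _ _ assms(4)]
  by (auto simp: gauge_def hratio_def vratio_def prod_zero_iff)

lemma vratio_mult_prod_hratio: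
  assumes n: "2 \<le> n" and "a < n" "b < n" and lab: "is_labeling n x"
    and cyc: "\<forall>vs cs. is_cycleX n vs cs \<longrightarrow> cycle_product x vs cs = 1"
  shows "vratio n x a 0 * (\<Prod>b'<b. hratio n x (cyc_suc n a) b') =
    (\<Prod>b'<b. hratio n x a b') * vratio n x a b"
  using \<open>b < n\<close>
proof (induction b)
  case 0
  then show ?case by simp
next
  case (Suc b)
  have face: "vratio n x a b * hratio n x (cyc_suc n a) b = hratio n x a b * vratio n x a (Suc b)"
    using face_relation[OF n \<open>a < n\<close> _ lab cyc, of b] Suc.prems by (simp add: cyc_suc_def)
  have "vratio n x a 0 * (\<Prod>b'<Suc b. hratio n x (cyc_suc n a) b')
      = (vratio n x a 0 * (\<Prod>b'<b. hratio n x (cyc_suc n a) b')) * hratio n x (cyc_suc n a) b"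
    by (simp add: mult_ac)
  also have "\<dots> = (\<Prod>b'<b. hratio n x a b') * (vratio n x a b * hratio n x (cyc_suc n a) b)"
    using Suc by (simp add: mult_ac)
  also have "\<dots> = (\<Prod>b'<Suc b. hratio n x a b') * vratio n x a (Suc b)"
    unfolding face by (simp add: mult_ac)
  finally show ?case .
qed

lemma gauge_cyc_suc_right:
  assumes n: "2 \<le> n" and "a < n" "b < n"
    and cyc: "\<forall>vs cs. is_cycleX n vs cs \<longrightarrow> cycle_product x vs cs = 1"
  shows "gauge n x a (cyc_suc n b) = gauge n x a b * hratio n x a b"
proof -
  have step: "gauge n x a b * hratio n x a b = (\<Prod>a'<a. vratio n x a' 0) * (\<Prod>b'<Suc b. hratio n x a b')"
    by (simp add: gauge_def mult.assoc)
  show ?thesis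
  proof (cases "b + 1 < n")
    case True
    then show ?thesis unfolding step by (simp add: gauge_def cyc_suc_def)
  next
    case False
    then have "Suc b = n" "cyc_suc n b = 0" using \<open>b < n\<close> by (auto simp: cyc_suc_eq)
    then show ?thesis unfolding step using prod_hratio_row[OF n \<open>a < n\<close> cyc] by (simp add: gauge_def)
  qed
qed

lemma gauge_cyc_suc_left:
  assumes n: "2 \<le> n" and "a < n" "b < n" and lab: "is_labeling n x"
    and cyc: "\<forall>vs cs. is_cycleX n vs cs \<longrightarrow> cycle_product x vs cs = 1"
  shows "gauge n x (cyc_suc n a) b = gauge n x a b * vratio n x a b"
proof -
  have step: "gauge n x a b * vratio n x a b =
      (\<Prod>a'<Suc a. vratio n x a' 0) * (\<Prod>b'<b. hratio n x (cyc_suc n a) b')"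
    using vratio_mult_prod_hratio[OF assms] by (simp add: gauge_def mult_ac)
  show ?thesis
  proof (cases "a + 1 < n")
    case True
    then show ?thesis unfolding step by (simp add: gauge_def cyc_suc_def)
  next
    case False
    then have "Suc a = n" "cyc_suc n a = 0" using \<open>a < n\<close> by (auto simp: cyc_suc_eq)
    then show ?thesis unfolding step using prod_vratio_column[OF n cyc] by (simp add: gauge_def)
  qed
qed

lemma gauge_hvar_balance:
  assumes "2 \<le> n" "a < n" "b < n" "is_labeling n x"
    and "\<forall>vs cs. is_cycleX n vs cs \<longrightarrow> cycle_product x vs cs = 1"
  shows "gauge n x a b * x (xcheck a b) (hvar a b) =
    gauge n x a (cyc_suc n b) * x (xcheck a (cyc_suc n b)) (hvar a b)"
  using gauge_cyc_suc_right[OF assms(1-3,5)] labeling_nonzero_at_edges(2)[OF assms(1-4)]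
  by (simp add: hratio_def)

lemma gauge_vvar_balance:
  assumes "2 \<le> n" "a < n" "b < n" "is_labeling n x"
    and "\<forall>vs cs. is_cycleX n vs cs \<longrightarrow> cycle_product x vs cs = 1"
  shows "gauge n x a b * x (xcheck a b) (vvar n a b) =
    gauge n x (cyc_suc n a) b * x (xcheck (cyc_suc n a) b) (vvar n a b)"
  using gauge_cyc_suc_left[OF assms] labeling_nonzero_at_edges(4)[OF assms(1-4)]
  by (simp add: vratio_def)

section \<open>Lower bound\<close>

lemma one_plus_one_eq_0_if_card_power_of_2:
  assumes "card (UNIV :: 'a::{field,finite} set) = 2 ^ m"
  shows "(1::'a) + 1 = 0"
proof -
  have prime: "prime CHAR('a)"
    by (rule prime_CHAR_semidom[OF finite_imp_CHAR_pos]) simp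
  moreover have "CHAR('a) dvd 2 ^ m" using CHAR_dvd_CARD[where 'a='a] assms by simp
  ultimately have "CHAR('a) dvd 2" using prime_dvd_power by blast
  then have "CHAR('a) \<le> 2" by (simp add: dvd_imp_le)
  with prime have "CHAR('a) = 2" using prime_ge_2_nat[of "CHAR('a)"] by linarith
  then have "(of_nat 2 :: 'a) = 0" by (metis of_nat_CHAR)
  then show ?thesis by simp
qed

lemma weighted_check_sums_eq_0:
  fixes x :: "nat \<times> nat \<Rightarrow> nat \<times> nat \<Rightarrow> 'a::field"
  assumes n: "2 \<le> n" and lab: "is_labeling n x" and char2: "(1::'a) + 1 = 0"
    and hbal: "\<And>a b. a < n \<Longrightarrow> b < n \<Longrightarrow>
      g a b * x (xcheck a b) (hvar a b) = g a (cyc_suc n b) * x (xcheck a (cyc_suc n b)) (hvar a b)"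
    and vbal: "\<And>a b. a < n \<Longrightarrow> b < n \<Longrightarrow>
      g a b * x (xcheck a b) (vvar n a b) = g (cyc_suc n a) b * x (xcheck (cyc_suc n a) b) (vvar n a b)"
  shows "(\<Sum>a<n. \<Sum>b<n. g a b * check_sum n x (xcheck a b) w) = 0"
proof -
  have n0: "0 < n" using n by simp
  define V1 where "V1 a b = g a b * x (xcheck a b) (vvar n a b) * w (vvar n a b)" for a b
  define V2 where "V2 a b = g a b * x (xcheck a b) (vvar n (cyc_pred n a) b) * w (vvar n (cyc_pred n a) b)"
    for a b
  define H1 where "H1 a b = g a b * x (xcheck a b) (hvar a b) * w (hvar a b)" for a b
  define H2 where "H2 a b = g a b * x (xcheck a b) (hvar a (cyc_pred n b)) * w (hvar a (cyc_pred n b))"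
    for a b
  have "(\<Sum>a<n. \<Sum>b<n. g a b * check_sum n x (xcheck a b) w)
      = (\<Sum>a<n. \<Sum>b<n. V1 a b + V2 a b + H1 a b + H2 a b)"
    using n lab
    by (intro sum.cong refl) (simp add: check_sum_xcheck V1_def V2_def H1_def H2_def algebra_simps)
  also have "\<dots> = (\<Sum>a<n. \<Sum>b<n. V1 a b) + (\<Sum>a<n. \<Sum>b<n. V2 a b)
      + (\<Sum>a<n. \<Sum>b<n. H1 a b) + (\<Sum>a<n. \<Sum>b<n. H2 a b)"
    by (simp add: sum.distrib)
  also have "(\<Sum>a<n. \<Sum>b<n. V2 a b) = (\<Sum>a<n. \<Sum>b<n. V1 a b)"
  proof -
    have "(\<Sum>a<n. \<Sum>b<n. V2 a b) = (\<Sum>a<n. \<Sum>b<n. V2 (cyc_suc n a) b)"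
      using sum_cyc_suc[OF n0, of "\<lambda>a. \<Sum>b<n. V2 a b"] by simp
    also have "\<dots> = (\<Sum>a<n. \<Sum>b<n. V1 a b)"
      by (intro sum.cong refl) (simp add: V1_def V2_def cyc_pred_cyc_suc vbal)
    finally show ?thesis .
  qed
  also have "(\<Sum>a<n. \<Sum>b<n. H2 a b) = (\<Sum>a<n. \<Sum>b<n. H1 a b)"
  proof (rule sum.cong[OF refl])
    fix a assume "a \<in> {..<n}"
    have "(\<Sum>b<n. H2 a b) = (\<Sum>b<n. H2 a (cyc_suc n b))"
      using sum_cyc_suc[OF n0, of "H2 a"] by simp
    also have "\<dots> = (\<Sum>b<n. H1 a b)"
      using \<open>a \<in> {..<n}\<close> by (intro sum.cong refl) (simp add: H1_def H2_def cyc_pred_cyc_suc hbal)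
    finally show "(\<Sum>b<n. H2 a b) = (\<Sum>b<n. H1 a b)" .
  qed
  also have "(\<Sum>a<n. \<Sum>b<n. V1 a b) + (\<Sum>a<n. \<Sum>b<n. V1 a b) + (\<Sum>a<n. \<Sum>b<n. H1 a b)
      + (\<Sum>a<n. \<Sum>b<n. H1 a b) = (1 + 1) * ((\<Sum>a<n. \<Sum>b<n. V1 a b) + (\<Sum>a<n. \<Sum>b<n. H1 a b))"
    by (simp add: algebra_simps)
  also have "\<dots> = 0" using char2 by simp
  finally show ?thesis .
qed

lemma check_sum_xcheck_0_0_redundant:
  fixes x :: "nat \<times> nat \<Rightarrow> nat \<times> nat \<Rightarrow> 'a::field"
  assumes n: "2 \<le> n" and lab: "is_labeling n x" and char2: "(1::'a) + 1 = 0"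
    and cyc: "\<forall>vs cs. is_cycleX n vs cs \<longrightarrow> cycle_product x vs cs = 1"
    and w: "\<forall>c\<in>xcheck_nodes n - {xcheck 0 0}. check_sum n x c w = 0"
  shows "check_sum n x (xcheck 0 0) w = 0"
proof -
  let ?F = "\<lambda>(a, b). gauge n x a b * check_sum n x (xcheck a b) w"
  have "0 = (\<Sum>a<n. \<Sum>b<n. gauge n x a b * check_sum n x (xcheck a b) w)"
    using weighted_check_sums_eq_0[OF n lab char2 gauge_hvar_balance gauge_vvar_balance]
      n lab cyc by simp
  also have "\<dots> = (\<Sum>p\<in>{..<n} \<times> {..<n}. ?F p)"
    by (simp add: sum.cartesian_product)
  also have "\<dots> = (\<Sum>p\<in>{(0, 0)}. ?F p)"
    using n w xcheck_in_xcheck_nodes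
    by (intro sum.mono_neutral_right) (auto simp: xcheck_inject)
  also have "\<dots> = gauge n x 0 0 * check_sum n x (xcheck 0 0) w" by simp
  finally show ?thesis using gauge_nonzero[OF n _ _ lab, of 0 0] n by simp
qed

lemma dim_codeX_ge:
  fixes x :: "nat \<times> nat \<Rightarrow> nat \<times> nat \<Rightarrow> 'a::field"
  assumes n: "2 \<le> n" and lab: "is_labeling n x" and char2: "(1::'a) + 1 = 0"
    and cyc: "\<forall>vs cs. is_cycleX n vs cs \<longrightarrow> cycle_product x vs cs = 1"
  shows "n\<^sup>2 + 1 \<le> fdim (codeX n x)"
proof -
  let ?I = "xcheck_nodes n - {xcheck 0 0}"
  have "{w. \<forall>c\<in>xcheck_nodes n. check_sum n x c w = 0} = {w. \<forall>c\<in>?I. check_sum n x c w = 0}"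
    using check_sum_xcheck_0_0_redundant[OF n lab char2 cyc] by blast
  then have "codeX n x = supported_on (var_nodes n) \<inter> {w. \<forall>c\<in>?I. check_sum n x c w = 0}"
    by (simp add: codeX_eq)
  moreover have "pointwise.dim (supported_on (var_nodes n) :: (nat \<times> nat \<Rightarrow> 'a) set)
      \<le> pointwise.dim (supported_on (var_nodes n) \<inter> {w. \<forall>c\<in>?I. check_sum n x c w = 0}) + card ?I"
    by (rule pointwise.dim_le_dim_Int_kernels_plus_card[where W = "delta ` var_nodes n"])
      (use finite_var_nodes supported_on_subset_span_deltas[OF finite_var_nodes] in
        \<open>auto simp: xcheck_nodes_eq_image subspace_supported_on module_hom_check_sum\<close>)
  moreover have "card ?I = n * n - 1"
    using n xcheck_in_xcheck_nodes[of 0 n 0] by (simp add: card_xcheck_nodes)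
  ultimately have "card (var_nodes n) \<le> fdim (codeX n x) + (n * n - 1)"
    by (simp add: pointwise_dim_supported_on[OF finite_var_nodes] fdim_eq_pointwise_dim)
  moreover have "1 \<le> n * n" using n by simp
  ultimately show ?thesis using card_var_nodes_ge[of n] unfolding power2_eq_square by linarith
qed

theorem lemma4:
  fixes x :: "nat \<times> nat \<Rightarrow> nat \<times> nat \<Rightarrow> 'a::{field,finite}"
    and n m :: nat
  assumes "n \<ge> 2"
    and "card (UNIV :: 'a set) = 2 ^ m"
    and "is_labeling n x"
    and "\<forall>vs cs. is_cycleX n vs cs \<longrightarrow> cycle_product x vs cs = 1"
  shows "fdim (codeX n x) = n^2 + 1"
proof -
  have "(1::'a) + 1 = 0" using one_plus_one_eq_0_if_card_power_of_2[OF assms(2)] .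
  then have "n\<^sup>2 + 1 \<le> fdim (codeX n x)" using dim_codeX_ge assms(1,3,4) by blast
  moreover have "fdim (codeX n x) \<le> n\<^sup>2 + 1" using dim_codeX_le assms(1,3) by blast
  ultimately show ?thesis by simp
qed

end
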